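(* Let $(\mathfrak g,\Delta)$ be a perm coalgebra, $r=\sum r^1\otimes r^2\in\mathfrak g\otimes\mathfrak g$ symmetric with $$r^1{}_{(1)}\otimes r^1{}_{(2)}\otimes r^2+r^1{}_{(1)}\otimes r^2\otimes r^1{}_{(2)}-r^1{}_{(2)}\otimes r^2\otimes r^1{}_{(1)}-r^2\otimes r^1{}_{(2)}\otimes r^1{}_{(1)}=0$$ (i.e. $(\mathfrak g,\Delta,r)$ is a cosymplectic perm coalgebra), and $\omega\in(\mathfrak g\otimes\mathfrak g)^*$ symmetric. Assume (i) $\omega$ satisfies the classical co-perm Yang–Baxter equation in $(\mathfrak g,\Delta)$, so that $(\mathfrak g,\Delta,\omega,\cdot_\omega)$ is a dual quasitriangular perm bialgebra, and (ii) $r$ satisfies the classical perm Yang–Baxter equation in the algebra $(\mathfrak g,\cdot_\omega)$, so that $(\mathfrak g,\cdot_\omega,r,\Delta_r)$ (with $\Delta_r$ formed using $\cdot_\omega$) is a quasitriangular perm bialgebra. Then $S:\mathfrak g\to\mathfrak g$, $S(x)=r^1\omega(r^2,x)$, makes $(\mathfrak g,\Delta,S)$ a Nijenhuis perm coalgebra, i.e. for all $x$: $$S(x_{(1)})\otimes S(x_{(2)})+S^2(x)_{(1)}\otimes S^2(x)_{(2)}=S(S(x)_{(1)})\otimes S(x)_{(2)}+S(x)_{(1)}\otimes S(S(x)_{(2)}).$$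
   Context: Over a field $K$; Sweedler notation $\Delta(x)=x_{(1)}\otimes x_{(2)}$. A perm coalgebra $(\mathfrak g,\Delta)$: $x_{(1)(1)}\otimes x_{(1)(2)}\otimes x_{(2)}=x_{(1)}\otimes x_{(2)(1)}\otimes x_{(2)(2)}=x_{(1)}\otimes x_{(2)(2)}\otimes x_{(2)(1)}$. $\omega$ symmetric: $\omega(x,y)=\omega(y,x)$; $r$ symmetric: invariant under the flip. Classical co-perm Yang–Baxter equation in $(\mathfrak g,\Delta)$: $\omega(x_{(1)},z)\omega(x_{(2)},y)-\omega(x,z_{(1)})\omega(y,z_{(2)})+\omega(y_{(1)},z)\omega(x,y_{(2)})-\omega(x,y_{(1)})\omega(y_{(2)},z)=0$; $x\cdot_\omega y=x_{(1)}\omega(x_{(2)},y)+y_{(1)}\omega(x,y_{(2)})-y_{(2)}\omega(x,y_{(1)})$. For a product $\cdot$ and $r$ with second copy $\bar r$: classical perm Yang–Baxter equation $r^1\bar r^1\otimes\bar r^2\otimes r^2-r^1\otimes\bar r^1\otimes r^2\bar r^2+\bar r^1\otimes r^1\bar r^2\otimes r^2-r^1\otimes r^2\bar r^1\otimes\bar r^2=0$ (products taken in $\cdot$), and $\Delta_r(x)=x\cdot r^1\otimes r^2+r^1\otimes x\cdot r^2-r^1\otimes r^2\cdot x$. *)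

theory Defs
  imports Complex_Main
begin

text \<open>The vector space g over the field K is a type 'v with a scalar multiplication
  scale :: 'k \<Rightarrow> 'v \<Rightarrow> 'v satisfying vector_space scale (no dimension restriction).
  Elements of g\<otimes>g (resp. g\<otimes>g\<otimes>g) are represented by formal finite sums
  (lists of pairs / triples); two formal sums represent the same tensor iff they
  agree under every bilinear (resp. trilinear) form, since (V\<otimes>W)* = Bil(V,W;K).\<close>

definition lin_form :: "('k::field \<Rightarrow> 'v::ab_group_add \<Rightarrow> 'v) \<Rightarrow> ('v \<Rightarrow> 'k) \<Rightarrow> bool" where
  "lin_form scale f \<longleftrightarrow> Vector_Spaces.linear scale (*) f"

definition bilin_form :: "('k::field \<Rightarrow> 'v::ab_group_add \<Rightarrow> 'v) \<Rightarrow> ('v \<Rightarrow> 'v \<Rightarrow> 'k) \<Rightarrow> bool" where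
  "bilin_form scale B \<longleftrightarrow> (\<forall>y. lin_form scale (\<lambda>x. B x y)) \<and> (\<forall>x. lin_form scale (B x))"

definition trilin_form :: "('k::field \<Rightarrow> 'v::ab_group_add \<Rightarrow> 'v) \<Rightarrow> ('v \<Rightarrow> 'v \<Rightarrow> 'v \<Rightarrow> 'k) \<Rightarrow> bool" where
  "trilin_form scale T \<longleftrightarrow>
     (\<forall>y z. lin_form scale (\<lambda>x. T x y z)) \<and> (\<forall>x z. lin_form scale (\<lambda>y. T x y z))
     \<and> (\<forall>x y. lin_form scale (T x y))"

definition teq2 :: "('k::field \<Rightarrow> 'v::ab_group_add \<Rightarrow> 'v) \<Rightarrow> ('v \<times> 'v) list \<Rightarrow> ('v \<times> 'v) list \<Rightarrow> bool" where
  "teq2 scale xs ys \<longleftrightarrow> (\<forall>B. bilin_form scale B \<longrightarrow>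
     (\<Sum>(a,b)\<leftarrow>xs. B a b) = (\<Sum>(a,b)\<leftarrow>ys. B a b))"

definition teq3 :: "('k::field \<Rightarrow> 'v::ab_group_add \<Rightarrow> 'v) \<Rightarrow> ('v \<times> 'v \<times> 'v) list \<Rightarrow> ('v \<times> 'v \<times> 'v) list \<Rightarrow> bool" where
  "teq3 scale xs ys \<longleftrightarrow> (\<forall>T. trilin_form scale T \<longrightarrow>
     (\<Sum>(a,b,c)\<leftarrow>xs. T a b c) = (\<Sum>(a,b,c)\<leftarrow>ys. T a b c))"

definition linear_comult :: "('k::field \<Rightarrow> 'v::ab_group_add \<Rightarrow> 'v) \<Rightarrow> ('v \<Rightarrow> ('v \<times> 'v) list) \<Rightarrow> bool" where
  "linear_comult scale \<Delta> \<longleftrightarrow> (\<forall>B. bilin_form scale B \<longrightarrow> lin_form scale (\<lambda>x. \<Sum>(a,b)\<leftarrow>\<Delta> x. B a b))"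

definition perm_coalgebra :: "('k::field \<Rightarrow> 'v::ab_group_add \<Rightarrow> 'v) \<Rightarrow> ('v \<Rightarrow> ('v \<times> 'v) list) \<Rightarrow> bool" where
  "perm_coalgebra scale \<Delta> \<longleftrightarrow> vector_space scale \<and> linear_comult scale \<Delta> \<and>
     (\<forall>x. teq3 scale [(c,d,b). (a,b) \<leftarrow> \<Delta> x, (c,d) \<leftarrow> \<Delta> a] [(a,c,d). (a,b) \<leftarrow> \<Delta> x, (c,d) \<leftarrow> \<Delta> b]
        \<and> teq3 scale [(a,c,d). (a,b) \<leftarrow> \<Delta> x, (c,d) \<leftarrow> \<Delta> b] [(a,d,c). (a,b) \<leftarrow> \<Delta> x, (c,d) \<leftarrow> \<Delta> b])"

definition sym_tensor :: "('k::field \<Rightarrow> 'v::ab_group_add \<Rightarrow> 'v) \<Rightarrow> ('v \<times> 'v) list \<Rightarrow> bool" where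
  "sym_tensor scale r \<longleftrightarrow> teq2 scale r (map (\<lambda>(a,b). (b,a)) r)"

definition cosymplectic :: "('k::field \<Rightarrow> 'v::ab_group_add \<Rightarrow> 'v) \<Rightarrow> ('v \<Rightarrow> ('v \<times> 'v) list) \<Rightarrow> ('v \<times> 'v) list \<Rightarrow> bool" where
  "cosymplectic scale \<Delta> r \<longleftrightarrow>
     teq3 scale ([(c,d,b). (a,b) \<leftarrow> r, (c,d) \<leftarrow> \<Delta> a] @ [(c,b,d). (a,b) \<leftarrow> r, (c,d) \<leftarrow> \<Delta> a])
                ([(d,b,c). (a,b) \<leftarrow> r, (c,d) \<leftarrow> \<Delta> a] @ [(b,d,c). (a,b) \<leftarrow> r, (c,d) \<leftarrow> \<Delta> a])"

definition ccpYBE :: "('v \<Rightarrow> ('v \<times> 'v) list) \<Rightarrow> ('v \<Rightarrow> 'v \<Rightarrow> 'k::field) \<Rightarrow> bool" where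
  "ccpYBE \<Delta> \<omega> \<longleftrightarrow> (\<forall>x y z.
       (\<Sum>(a,b)\<leftarrow>\<Delta> x. \<omega> a z * \<omega> b y) - (\<Sum>(a,b)\<leftarrow>\<Delta> z. \<omega> x a * \<omega> y b)
     + (\<Sum>(a,b)\<leftarrow>\<Delta> y. \<omega> a z * \<omega> x b) - (\<Sum>(a,b)\<leftarrow>\<Delta> y. \<omega> x a * \<omega> b z) = 0)"

definition omega_prod :: "('k::field \<Rightarrow> 'v::ab_group_add \<Rightarrow> 'v) \<Rightarrow> ('v \<Rightarrow> ('v \<times> 'v) list) \<Rightarrow> ('v \<Rightarrow> 'v \<Rightarrow> 'k) \<Rightarrow> 'v \<Rightarrow> 'v \<Rightarrow> 'v" where
  "omega_prod scale \<Delta> \<omega> x y =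
       (\<Sum>(a,b)\<leftarrow>\<Delta> x. scale (\<omega> b y) a) + (\<Sum>(a,b)\<leftarrow>\<Delta> y. scale (\<omega> x b) a)
     - (\<Sum>(a,b)\<leftarrow>\<Delta> y. scale (\<omega> x a) b)"

definition cpYBE :: "('k::field \<Rightarrow> 'v::ab_group_add \<Rightarrow> 'v) \<Rightarrow> ('v \<Rightarrow> 'v \<Rightarrow> 'v) \<Rightarrow> ('v \<times> 'v) list \<Rightarrow> bool" where
  "cpYBE scale m r \<longleftrightarrow>
     teq3 scale ([(m a c, d, b). (a,b) \<leftarrow> r, (c,d) \<leftarrow> r] @ [(c, m a d, b). (a,b) \<leftarrow> r, (c,d) \<leftarrow> r])
                ([(a, c, m b d). (a,b) \<leftarrow> r, (c,d) \<leftarrow> r] @ [(a, m b c, d). (a,b) \<leftarrow> r, (c,d) \<leftarrow> r])"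

definition S_map :: "('k::field \<Rightarrow> 'v::ab_group_add \<Rightarrow> 'v) \<Rightarrow> ('v \<times> 'v) list \<Rightarrow> ('v \<Rightarrow> 'v \<Rightarrow> 'k) \<Rightarrow> 'v \<Rightarrow> 'v" where
  "S_map scale r \<omega> x = (\<Sum>(a,b)\<leftarrow>r. scale (\<omega> b x) a)"

definition nijenhuis_perm_coalgebra :: "('k::field \<Rightarrow> 'v::ab_group_add \<Rightarrow> 'v) \<Rightarrow> ('v \<Rightarrow> ('v \<times> 'v) list) \<Rightarrow> ('v \<Rightarrow> 'v) \<Rightarrow> bool" where
  "nijenhuis_perm_coalgebra scale \<Delta> S \<longleftrightarrow> perm_coalgebra scale \<Delta> \<and> Vector_Spaces.linear scale scale S \<and>
     (\<forall>x. teq2 scale ([(S a, S b). (a,b) \<leftarrow> \<Delta> x] @ \<Delta> (S (S x)))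
                      ([(S a, b). (a,b) \<leftarrow> \<Delta> (S x)] @ [(a, S b). (a,b) \<leftarrow> \<Delta> (S x)]))"

end

theory Submission
  imports Defs
begin

text \<open>Both sides of the Nijenhuis identity are compared after pairing with an arbitrary bilinear
  form \<open>\<beta>\<close>. Writing \<open>S x = r\<^sup>1 \<omega>(r\<^sup>2, x)\<close> and using linearity of \<open>\<Delta>\<close> and the symmetry of
  \<open>r\<close> and \<open>\<omega>\<close>, every term becomes a contraction \<open>f(r\<^sup>1\<^sub>(\<^sub>1\<^sub>), r\<^sup>1\<^sub>(\<^sub>2\<^sub>), r\<^sup>2)\<close> of
  a trilinear expression \<open>f\<close> built from \<open>\<beta>\<close>, \<open>\<omega>\<close>, \<open>S\<close> and \<open>x\<close>. The co-perm Yang--Baxter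
  equation rewrites the term \<open>\<beta>(S x\<^sub>(\<^sub>1\<^sub>), S x\<^sub>(\<^sub>2\<^sub>))\<close> in this form, the cosymplectic condition
  and the perm Yang--Baxter equation for \<open>r\<close> in \<open>(\<mathfrak>g, \<cdot>\<^sub>\<omega>)\<close> (with \<open>\<cdot>\<^sub>\<omega>\<close> expanded) give two
  linear relations between the contractions, and the identity is a linear combination of them.\<close>

lemma vector_space_field_mult: "vector_space ((*) :: 'k::field \<Rightarrow> 'k \<Rightarrow> 'k)"
  by unfold_locales (auto simp: algebra_simps)

lemma lin_formI:
  assumes "vector_space s" "\<And>x y. f (x + y) = f x + f y" "\<And>c x. f (s c x) = c * f x"
  shows "lin_form s f"
  unfolding lin_form_def Vector_Spaces.linear_iff using vector_space_field_mult assms by auto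

lemma lin_form_add: "lin_form s f \<Longrightarrow> f (x + y) = f x + f y"
  unfolding lin_form_def Vector_Spaces.linear_iff by auto

lemma lin_form_scale: "lin_form s f \<Longrightarrow> f (s c x) = c * f x"
  unfolding lin_form_def Vector_Spaces.linear_iff by auto

lemma lin_form_vector_space: "lin_form s f \<Longrightarrow> vector_space s"
  unfolding lin_form_def Vector_Spaces.linear_iff by auto

lemma lin_form_zero: "lin_form s f \<Longrightarrow> f 0 = 0"
  using lin_form_add[of s f 0 0] by (metis add.right_neutral add_left_cancel)

lemma lin_form_diff: "lin_form s f \<Longrightarrow> f (x - y) = f x - f y"
  using lin_form_add[of s f "x - y" y] by (simp add: algebra_simps)

lemma lin_form_sum_list_scale:
  "lin_form s f \<Longrightarrow> f (\<Sum>(a,b)\<leftarrow>L. s (c a b) (h a b)) = (\<Sum>(a,b)\<leftarrow>L. c a b * f (h a b))"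
  by (induction L) (auto simp: lin_form_add lin_form_zero lin_form_scale)

lemma lin_form_mult_right: "lin_form s f \<Longrightarrow> lin_form s (\<lambda>x. f x * c)"
  by (rule lin_formI) (auto simp: lin_form_vector_space lin_form_add lin_form_scale algebra_simps)

lemma lin_form_mult_left: "lin_form s f \<Longrightarrow> lin_form s (\<lambda>x. c * f x)"
  by (rule lin_formI) (auto simp: lin_form_vector_space lin_form_add lin_form_scale algebra_simps)

lemma lin_form_sum_list:
  assumes "vector_space s" "\<And>i. lin_form s (g i)"
  shows "lin_form s (\<lambda>x. \<Sum>i\<leftarrow>L. g i x)"
  by (rule lin_formI)
    (simp_all add: assms lin_form_add[OF assms(2)] lin_form_scale[OF assms(2)]
      sum_list_addf sum_list_const_mult)

lemma bilin_form_left: "bilin_form s B \<Longrightarrow> lin_form s (\<lambda>x. B x y)"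
  unfolding bilin_form_def by auto

lemma bilin_form_right: "bilin_form s B \<Longrightarrow> lin_form s (B x)"
  unfolding bilin_form_def by auto

lemma bilin_formI:
  "(\<And>y. lin_form s (\<lambda>x. B x y)) \<Longrightarrow> (\<And>x. lin_form s (B x)) \<Longrightarrow> bilin_form s B"
  unfolding bilin_form_def by auto

lemma trilin_formI:
  "(\<And>y z. lin_form s (\<lambda>x. T x y z)) \<Longrightarrow> (\<And>x z. lin_form s (\<lambda>y. T x y z)) \<Longrightarrow>
    (\<And>x y. lin_form s (T x y)) \<Longrightarrow> trilin_form s T"
  unfolding trilin_form_def by auto

lemma sum_list_concat_map:
  "sum_list (map g (concat (map h L))) = (\<Sum>x\<leftarrow>L. sum_list (map g (h x)))"
  by (induction L) auto

lemma sum_list_map_conv_sum_nth: "sum_list (map f xs) = (\<Sum>i<length xs. f (xs ! i))"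
  by (simp add: sum_list_sum_nth atLeast0LessThan)

locale symmetric_pairing =
  fixes s :: "'k::field \<Rightarrow> 'v::ab_group_add \<Rightarrow> 'v"
    and \<Delta> :: "'v \<Rightarrow> ('v \<times> 'v) list"
    and r :: "('v \<times> 'v) list"
    and \<omega> :: "'v \<Rightarrow> 'v \<Rightarrow> 'k"
  assumes vector_space: "vector_space s"
    and linear_comult: "linear_comult s \<Delta>"
    and sym_r: "sym_tensor s r"
    and bilin_\<omega>: "bilin_form s \<omega>"
    and sym_\<omega>: "\<And>x y. \<omega> x y = \<omega> y x"
begin

sublocale vs: vector_space s by (rule vector_space)

abbreviation S where "S \<equiv> S_map s r \<omega>"

lemma scale_sum_list_scale:
  "s c (\<Sum>(a,b)\<leftarrow>L. s (f a b) a) = (\<Sum>(a,b)\<leftarrow>L. s (c * f a b) a)"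
  by (induction L) (auto simp: vs.scale_right_distrib)

lemma sum_list_scale_add:
  "(\<Sum>(a,b)\<leftarrow>L. s (f a b + g a b) a) = (\<Sum>(a,b)\<leftarrow>L. s (f a b) a) + (\<Sum>(a,b)\<leftarrow>L. s (g a b) a)"
  by (induction L) (auto simp: vs.scale_left_distrib algebra_simps)

lemma S_add: "S (x + y) = S x + S y"
  unfolding S_map_def using lin_form_add[OF bilin_form_right[OF bilin_\<omega>]]
  by (simp add: sum_list_scale_add)

lemma S_scale: "S (s c x) = s c (S x)"
  unfolding S_map_def using lin_form_scale[OF bilin_form_right[OF bilin_\<omega>]]
  by (simp add: scale_sum_list_scale)

lemma lin_form_comp_S: "lin_form s l \<Longrightarrow> lin_form s (\<lambda>x. l (S x))"
  by (rule lin_formI) (auto simp: vector_space S_add S_scale lin_form_add lin_form_scale)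

lemma lin_form_comult: "bilin_form s G \<Longrightarrow> lin_form s (\<lambda>x. \<Sum>(a,b)\<leftarrow>\<Delta> x. G a b)"
  using linear_comult unfolding linear_comult_def by auto

lemma sum_r_flip: "bilin_form s F \<Longrightarrow> (\<Sum>(u,v)\<leftarrow>r. F u v) = (\<Sum>(u,v)\<leftarrow>r. F v u)"
  using sym_r unfolding sym_tensor_def teq2_def by (auto simp: o_def split_def)

lemma S_left_expand: "bilin_form s B \<Longrightarrow> B (S y) z = (\<Sum>(p,q)\<leftarrow>r. \<omega> q y * B p z)"
  unfolding S_map_def by (rule lin_form_sum_list_scale[OF bilin_form_left])

lemma S_right_expand: "bilin_form s B \<Longrightarrow> B z (S y) = (\<Sum>(p,q)\<leftarrow>r. \<omega> q y * B z p)"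
  unfolding S_map_def by (rule lin_form_sum_list_scale[OF bilin_form_right])

lemma S_right_expand_flip: "bilin_form s B \<Longrightarrow> B z (S y) = (\<Sum>(p,q)\<leftarrow>r. \<omega> p y * B z q)"
  unfolding S_right_expand
  by (rule sum_r_flip, rule bilin_formI)
    (rule lin_form_mult_left, erule bilin_form_right, rule lin_form_mult_right[OF bilin_form_left[OF bilin_\<omega>]])

lemma comult_S_expand:
  "bilin_form s G \<Longrightarrow>
    (\<Sum>(a,b)\<leftarrow>\<Delta> (S y). G a b) = (\<Sum>(p,q)\<leftarrow>r. \<omega> q y * (\<Sum>(a,b)\<leftarrow>\<Delta> p. G a b))"
  unfolding S_map_def by (rule lin_form_sum_list_scale[OF lin_form_comult])

definition contract_r :: "('v \<Rightarrow> 'v \<Rightarrow> 'v \<Rightarrow> 'k) \<Rightarrow> 'k" where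
  "contract_r f = (\<Sum>(u,v)\<leftarrow>r. \<Sum>(a,b)\<leftarrow>\<Delta> u. f a b v)"

lemma contract_r_flip:
  assumes "trilin_form s f"
  shows "contract_r f = (\<Sum>(u,v)\<leftarrow>r. \<Sum>(a,b)\<leftarrow>\<Delta> v. f a b u)"
proof -
  have "bilin_form s (\<lambda>u v. \<Sum>(a,b)\<leftarrow>\<Delta> v. f a b u)"
  proof (rule bilin_formI)
    fix v show "lin_form s (\<lambda>u. \<Sum>(a,b)\<leftarrow>\<Delta> v. f a b u)"
      unfolding split_def
      by (rule lin_form_sum_list[OF vector_space]) (use assms in \<open>simp add: trilin_form_def\<close>)
  next
    fix u show "lin_form s (\<lambda>v. \<Sum>(a,b)\<leftarrow>\<Delta> v. f a b u)"
      by (rule lin_form_comult, rule bilin_formI) (use assms in \<open>simp_all add: trilin_form_def\<close>)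
  qed
  then show ?thesis unfolding contract_r_def by (rule sum_r_flip[symmetric])
qed

text \<open>Index-level sum swaps whose shapes the simplifier cannot find on its own: together with
  distributivity they normalise nested sums over \<open>r\<close>, \<open>r\<close> and \<open>\<Delta>\<close> to a common order.\<close>

lemma sum_swap_comult_r:
  "(\<Sum>k<length (\<Delta> y). \<Sum>j<length r. f k j) = (\<Sum>j<length r. \<Sum>k<length (\<Delta> y). (f k j :: 'z::comm_monoid_add))"
  by (rule sum.swap)

lemma sum_swap_r_comult_fst:
  "(\<Sum>i<length r. \<Sum>j<length r. \<Sum>k<length (\<Delta> (fst (r ! j))). f i j k)
    = (\<Sum>j<length r. \<Sum>i<length r. \<Sum>k<length (\<Delta> (fst (r ! j))). (f i j k :: 'z::comm_monoid_add))"
  by (rule sum.swap)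

lemma sum_swap_r_comult_snd:
  "(\<Sum>i<length r. \<Sum>j<length r. \<Sum>k<length (\<Delta> (snd (r ! j))). f i j k)
    = (\<Sum>j<length r. \<Sum>i<length r. \<Sum>k<length (\<Delta> (snd (r ! j))). (f i j k :: 'z::comm_monoid_add))"
  by (rule sum.swap)

lemmas sum_normalize = sum_list_map_conv_sum_nth split_def sum_distrib_left sum_distrib_right
  sum_swap_comult_r sum_swap_r_comult_fst sum_swap_r_comult_snd sym_\<omega> mult_ac sum.distrib
  sum_subtractf ring_distribs

end

locale quasitriangular_data = symmetric_pairing +
  assumes ccpYBE: "ccpYBE \<Delta> \<omega>"
    and cosymplectic: "cosymplectic s \<Delta> r"
    and cpYBE: "cpYBE s (omega_prod s \<Delta> \<omega>) r"
begin

lemma ccpYBE_rearranged: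
  "(\<Sum>(a,b)\<leftarrow>\<Delta> x. \<omega> a v * \<omega> b w)
    = (\<Sum>(a,b)\<leftarrow>\<Delta> v. \<omega> x a * \<omega> w b) - (\<Sum>(a,b)\<leftarrow>\<Delta> w. \<omega> a v * \<omega> x b)
      + (\<Sum>(a,b)\<leftarrow>\<Delta> w. \<omega> x a * \<omega> b v)"
proof -
  have "(\<Sum>(a,b)\<leftarrow>\<Delta> x. \<omega> a v * \<omega> b w) - (\<Sum>(a,b)\<leftarrow>\<Delta> v. \<omega> x a * \<omega> w b)
      + (\<Sum>(a,b)\<leftarrow>\<Delta> w. \<omega> a v * \<omega> x b) - (\<Sum>(a,b)\<leftarrow>\<Delta> w. \<omega> x a * \<omega> b v) = 0"
    using ccpYBE unfolding ccpYBE_def by blast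
  then show ?thesis by (simp add: algebra_simps)
qed

context
  fixes \<beta>
  assumes \<beta>: "bilin_form s \<beta>"
begin

lemma sum_comult_S_S:
  "(\<Sum>(a,b)\<leftarrow>\<Delta> x. \<beta> (S a) (S b))
    = contract_r (\<lambda>a b v. \<beta> v (S b) * \<omega> a x) - contract_r (\<lambda>a b v. \<beta> (S a) v * \<omega> b x)
      + contract_r (\<lambda>a b v. \<beta> (S b) v * \<omega> a x)"
proof -
  have expand: "(\<Sum>(a,b)\<leftarrow>\<Delta> x. \<beta> (S a) (S b))
      = (\<Sum>(u,v)\<leftarrow>r. \<Sum>(u',v')\<leftarrow>r. \<beta> u u' * (\<Sum>(a,b)\<leftarrow>\<Delta> x. \<omega> a v * \<omega> b v'))"
    by (simp only: S_left_expand[OF \<beta>], simp only: S_right_expand[OF \<beta>], simp add: sum_normalize)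
  have "trilin_form s (\<lambda>a b v. \<beta> v (S b) * \<omega> a x)"
    and "trilin_form s (\<lambda>a b v. \<beta> (S a) v * \<omega> b x)"
    and "trilin_form s (\<lambda>a b v. \<beta> (S b) v * \<omega> a x)"
    by (intro trilin_formI; rule lin_form_mult_left lin_form_mult_right; (rule lin_form_comp_S)?;
      rule bilin_form_left bilin_form_right; rule bilin_\<omega> \<beta>)+
  note flips = this[THEN contract_r_flip]
  show ?thesis
    unfolding expand ccpYBE_rearranged flips
    by (simp only: S_left_expand[OF \<beta>] S_right_expand[OF \<beta>]) (simp add: sum_normalize algebra_simps)
qed

lemma sum_comult_S_S_arg:
  "(\<Sum>(a,b)\<leftarrow>\<Delta> (S (S x)). \<beta> a b) = contract_r (\<lambda>a b v. \<beta> a b * \<omega> v (S x))"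
  unfolding comult_S_expand[OF \<beta>] contract_r_def by (simp add: sum_normalize)

lemma sum_comult_S_arg_left:
  "(\<Sum>(a,b)\<leftarrow>\<Delta> (S x). \<beta> (S a) b) = contract_r (\<lambda>a b v. \<beta> (S a) b * \<omega> v x)"
proof -
  have bilin: "bilin_form s (\<lambda>a b. \<beta> (S a) b)"
    by (intro bilin_formI; (rule lin_form_comp_S)?; rule bilin_form_left bilin_form_right; rule \<beta>)
  show ?thesis unfolding comult_S_expand[OF bilin] contract_r_def by (simp add: sum_normalize)
qed

lemma sum_comult_S_arg_right:
  "(\<Sum>(a,b)\<leftarrow>\<Delta> (S x). \<beta> a (S b)) = contract_r (\<lambda>a b v. \<beta> a (S b) * \<omega> v x)"
proof -
  have bilin: "bilin_form s (\<lambda>a b. \<beta> a (S b))"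
    by (intro bilin_formI; (rule lin_form_comp_S)?; rule bilin_form_left bilin_form_right; rule \<beta>)
  show ?thesis unfolding comult_S_expand[OF bilin] contract_r_def by (simp add: sum_normalize)
qed

lemma cosymplectic_contract:
  "contract_r (\<lambda>a b v. \<beta> a b * \<omega> v (S x)) + contract_r (\<lambda>a b v. \<beta> a v * \<omega> b (S x))
    = contract_r (\<lambda>a b v. \<beta> b v * \<omega> a (S x)) + contract_r (\<lambda>a b v. \<beta> v b * \<omega> a (S x))"
proof -
  have "trilin_form s (\<lambda>a b v. \<beta> a b * \<omega> v (S x))"
    by (intro trilin_formI; rule lin_form_mult_left lin_form_mult_right; (rule lin_form_comp_S)?;
      rule bilin_form_left bilin_form_right; rule bilin_\<omega> \<beta>)
  then show ?thesis
    using cosymplectic[unfolded cosymplectic_def teq3_def, rule_format]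
    by (simp add: contract_r_def sum_list_concat_map o_def split_def)
qed

abbreviation prod_\<omega> (infixl "\<cdot>\<^sub>\<omega>" 70) where "x \<cdot>\<^sub>\<omega> y \<equiv> omega_prod s \<Delta> \<omega> x y"

lemma cpYBE_tested:
  "(\<Sum>(u,v)\<leftarrow>r. \<Sum>(c,d)\<leftarrow>r. \<beta> (u \<cdot>\<^sub>\<omega> c) d * \<omega> v x)
    + (\<Sum>(u,v)\<leftarrow>r. \<Sum>(c,d)\<leftarrow>r. \<beta> c (u \<cdot>\<^sub>\<omega> d) * \<omega> v x)
    = (\<Sum>(u,v)\<leftarrow>r. \<Sum>(c,d)\<leftarrow>r. \<beta> u c * \<omega> (v \<cdot>\<^sub>\<omega> d) x)
      + (\<Sum>(u,v)\<leftarrow>r. \<Sum>(c,d)\<leftarrow>r. \<beta> u (v \<cdot>\<^sub>\<omega> c) * \<omega> d x)"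
proof -
  have "trilin_form s (\<lambda>a b v. \<beta> a b * \<omega> v x)"
    by (intro trilin_formI; rule lin_form_mult_left lin_form_mult_right; (rule lin_form_comp_S)?;
      rule bilin_form_left bilin_form_right; rule bilin_\<omega> \<beta>)
  then show ?thesis
    using cpYBE[unfolded cpYBE_def teq3_def, rule_format]
    by (simp add: sum_list_concat_map o_def split_def)
qed

lemma sum_r_r_prod_first:
  "(\<Sum>(u,v)\<leftarrow>r. \<Sum>(c,d)\<leftarrow>r. \<beta> (u \<cdot>\<^sub>\<omega> c) d * \<omega> v x)
    = contract_r (\<lambda>a b v. \<beta> a (S b) * \<omega> v x) + contract_r (\<lambda>a b v. \<beta> a v * \<omega> b (S x))
      - contract_r (\<lambda>a b v. \<beta> b v * \<omega> a (S x))"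
  unfolding omega_prod_def contract_r_def
  by (simp only: lin_form_add[OF bilin_form_left[OF \<beta>]] lin_form_diff[OF bilin_form_left[OF \<beta>]]
      lin_form_sum_list_scale[OF bilin_form_left[OF \<beta>]] S_right_expand_flip[OF \<beta>]
      S_right_expand[OF bilin_\<omega>])
    (simp add: sum_normalize)

lemma sum_r_r_prod_second:
  "(\<Sum>(u,v)\<leftarrow>r. \<Sum>(c,d)\<leftarrow>r. \<beta> c (u \<cdot>\<^sub>\<omega> d) * \<omega> v x)
    = contract_r (\<lambda>a b v. \<beta> (S b) a * \<omega> v x) + contract_r (\<lambda>a b v. \<beta> v a * \<omega> b (S x))
      - contract_r (\<lambda>a b v. \<beta> v b * \<omega> a (S x))"
proof -
  have "trilin_form s (\<lambda>a b v. \<beta> v a * \<omega> b (S x))"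
    and "trilin_form s (\<lambda>a b v. \<beta> v b * \<omega> a (S x))"
    by (intro trilin_formI; rule lin_form_mult_left lin_form_mult_right; (rule lin_form_comp_S)?;
      rule bilin_form_left bilin_form_right; rule bilin_\<omega> \<beta>)+
  note flips = this[THEN contract_r_flip]
  show ?thesis
    unfolding omega_prod_def flips contract_r_def
    by (simp only: lin_form_add[OF bilin_form_right[OF \<beta>]] lin_form_diff[OF bilin_form_right[OF \<beta>]]
        lin_form_sum_list_scale[OF bilin_form_right[OF \<beta>]] S_left_expand[OF \<beta>]
        S_right_expand[OF bilin_\<omega>])
      (simp add: sum_normalize)
qed

lemma sum_r_r_prod_third:
  "(\<Sum>(u,v)\<leftarrow>r. \<Sum>(c,d)\<leftarrow>r. \<beta> u c * \<omega> (v \<cdot>\<^sub>\<omega> d) x)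
    = contract_r (\<lambda>a b v. \<beta> v (S b) * \<omega> a x) + contract_r (\<lambda>a b v. \<beta> (S b) v * \<omega> a x)
      - contract_r (\<lambda>a b v. \<beta> (S a) v * \<omega> b x)"
proof -
  have "trilin_form s (\<lambda>a b v. \<beta> v (S b) * \<omega> a x)"
    and "trilin_form s (\<lambda>a b v. \<beta> (S b) v * \<omega> a x)"
    and "trilin_form s (\<lambda>a b v. \<beta> (S a) v * \<omega> b x)"
    by (intro trilin_formI; rule lin_form_mult_left lin_form_mult_right; (rule lin_form_comp_S)?;
      rule bilin_form_left bilin_form_right; rule bilin_\<omega> \<beta>)+
  note flips = this[THEN contract_r_flip]
  show ?thesis
    unfolding omega_prod_def flips
    by (simp only: lin_form_add[OF bilin_form_left[OF bilin_\<omega>]]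
        lin_form_diff[OF bilin_form_left[OF bilin_\<omega>]]
        lin_form_sum_list_scale[OF bilin_form_left[OF bilin_\<omega>]]
        S_left_expand[OF \<beta>] S_right_expand[OF \<beta>])
      (simp add: sum_normalize)
qed

lemma sum_r_r_prod_fourth:
  "(\<Sum>(u,v)\<leftarrow>r. \<Sum>(c,d)\<leftarrow>r. \<beta> u (v \<cdot>\<^sub>\<omega> c) * \<omega> d x)
    = contract_r (\<lambda>a b v. \<beta> v a * \<omega> b (S x)) + contract_r (\<lambda>a b v. \<beta> (S b) a * \<omega> v x)
      - contract_r (\<lambda>a b v. \<beta> (S a) b * \<omega> v x)"
proof -
  have "trilin_form s (\<lambda>a b v. \<beta> v a * \<omega> b (S x))"
    by (intro trilin_formI; rule lin_form_mult_left lin_form_mult_right; (rule lin_form_comp_S)?;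
      rule bilin_form_left bilin_form_right; rule bilin_\<omega> \<beta>)
  note flip = this[THEN contract_r_flip]
  show ?thesis
    unfolding omega_prod_def flip contract_r_def
    by (simp only: lin_form_add[OF bilin_form_right[OF \<beta>]] lin_form_diff[OF bilin_form_right[OF \<beta>]]
        lin_form_sum_list_scale[OF bilin_form_right[OF \<beta>]] S_left_expand[OF \<beta>]
        S_right_expand[OF bilin_\<omega>])
      (simp add: sum_normalize)
qed

lemma nijenhuis_identity_tested:
  "(\<Sum>(a,b)\<leftarrow>\<Delta> x. \<beta> (S a) (S b)) + (\<Sum>(a,b)\<leftarrow>\<Delta> (S (S x)). \<beta> a b)
    = (\<Sum>(a,b)\<leftarrow>\<Delta> (S x). \<beta> (S a) b) + (\<Sum>(a,b)\<leftarrow>\<Delta> (S x). \<beta> a (S b))"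
  using cpYBE_tested[of x] cosymplectic_contract[of x]
  unfolding sum_comult_S_S sum_comult_S_S_arg sum_comult_S_arg_left sum_comult_S_arg_right
    sum_r_r_prod_first sum_r_r_prod_second sum_r_r_prod_third sum_r_r_prod_fourth
  by algebra

end

end

theorem theorem3p13:
  fixes scale :: "'k::field \<Rightarrow> 'v::ab_group_add \<Rightarrow> 'v"
    and \<Delta> :: "'v \<Rightarrow> ('v \<times> 'v) list"
    and r :: "('v \<times> 'v) list"
    and \<omega> :: "'v \<Rightarrow> 'v \<Rightarrow> 'k"
  assumes "perm_coalgebra scale \<Delta>"
    and "sym_tensor scale r"
    and "cosymplectic scale \<Delta> r"
    and "bilin_form scale \<omega>"
    and "\<forall>x y. \<omega> x y = \<omega> y x"
    and "ccpYBE \<Delta> \<omega>"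
    and "cpYBE scale (omega_prod scale \<Delta> \<omega>) r"
  shows "nijenhuis_perm_coalgebra scale \<Delta> (S_map scale r \<omega>)"
proof -
  have "vector_space scale" and "linear_comult scale \<Delta>"
    using assms(1) unfolding perm_coalgebra_def by auto
  then interpret quasitriangular_data scale \<Delta> r \<omega>
    using assms
    by (simp add: quasitriangular_data_def quasitriangular_data_axioms_def symmetric_pairing_def)
  have "Vector_Spaces.linear scale scale S"
    by (simp add: Vector_Spaces.linear_iff vector_space S_add S_scale)
  moreover have "teq2 scale ([(S a, S b). (a,b) \<leftarrow> \<Delta> x] @ \<Delta> (S (S x)))
      ([(S a, b). (a,b) \<leftarrow> \<Delta> (S x)] @ [(a, S b). (a,b) \<leftarrow> \<Delta> (S x)])" for x
    unfolding teq2_def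
    using nijenhuis_identity_tested by (simp add: sum_list_concat_map o_def split_def)
  ultimately show ?thesis
    unfolding nijenhuis_perm_coalgebra_def using assms(1) by blast
qed
end
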